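(* Let $f$, $g$, $\xi$, $F$ satisfy the standing assumptions below, and let $x$ be the unique continuous solution of $x'(t)=-f(x(t))+g(t)$, $t>0$, $x(0)=\xi$. Suppose there exist $\delta>0$ and a function $\phi$ increasing on $(0,\delta)$ with $\lim_{x\to0^+}f(x)/\phi(x)=1$, that \[ \lim_{t\to\infty}\frac{g(t)}{f(F^{-1}(t))}=+\infty, \] and that $x(t)\to0$ as $t\to\infty$. If either $f\in\mathrm{RV}_0(\beta)$ for some $\beta>1$, or $f\circ F^{-1}\in\mathrm{RV}_\infty(-1)$, then \[ \lim_{t\to\infty}\frac{F(x(t))}{t}=0. \]
   Context: Standing assumptions: $f\in C(\mathbb{R};\mathbb{R})$ is locally Lipschitz continuous on $\mathbb{R}$, $f(0)=0$ and $xf(x)>0$ for $x\neq0$; $g\in C([0,\infty);\mathbb{R})$ with $g(t)>0$ for $t>0$; $\xi>0$. $F(x)=\int_x^1 \frac{du}{f(u)}$ for $x>0$, with $\lim_{x\to0^+}F(x)=+\infty$; $F^{-1}$ is the inverse of the strictly decreasing function $F$. $\mathrm{RV}_0(\beta)$: measurable positive $\varphi$ on $(0,\infty)$ with $\varphi(\lambda x)/\varphi(x)\to\lambda^\beta$ as $x\to0^+$ for every $\lambda>0$. $\mathrm{RV}_\infty(\alpha)$: measurable positive $h$ with $h(\lambda t)/h(t)\to\lambda^\alpha$ as $t\to\infty$ for every $\lambda>0$. *)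

theory Defs
  imports "HOL-Analysis.Analysis"
begin

definition Fint :: "(real \<Rightarrow> real) \<Rightarrow> real \<Rightarrow> real" where
  "Fint f x = (if x \<le> 1 then integral {x..1} (\<lambda>u. 1 / f u)
               else - integral {1..x} (\<lambda>u. 1 / f u))"

definition Finv :: "(real \<Rightarrow> real) \<Rightarrow> real \<Rightarrow> real" where
  "Finv f t = inv_into {0<..} (Fint f) t"

definition RV0 :: "real \<Rightarrow> (real \<Rightarrow> real) \<Rightarrow> bool" where
  "RV0 \<beta> \<phi> \<longleftrightarrow> (\<forall>x>0. \<phi> x > 0) \<and> \<phi> \<in> borel_measurable (restrict_space borel {0<..}) \<and>
     (\<forall>c>0. ((\<lambda>x. \<phi> (c * x) / \<phi> x) \<longlongrightarrow> c powr \<beta>) (at_right 0))"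

definition RVinf :: "real \<Rightarrow> (real \<Rightarrow> real) \<Rightarrow> bool" where
  "RVinf \<alpha> h \<longleftrightarrow> (\<exists>T. (\<forall>t\<ge>T. h t > 0) \<and> h \<in> borel_measurable (restrict_space borel {T..})) \<and>
     (\<forall>c>0. ((\<lambda>t. h (c * t) / h t) \<longlongrightarrow> c powr \<alpha>) at_top)"

end

theory Submission
  imports Defs
begin

text \<open>As long as \<open>F(x(t)) > \<epsilon> t\<close>, the solution lies below \<open>F\<^sup>-\<^sup>1(\<epsilon> t)\<close>. Since \<open>f\<close> is almost
  increasing near \<open>0\<close> and, in either regular-variation case, \<open>f(F\<^sup>-\<^sup>1(\<epsilon> t)) \<le> C f(F\<^sup>-\<^sup>1(t))\<close>,
  which is eventually smaller than \<open>g(t)\<close>, the solution is then increasing. As \<open>F\<close> is decreasing,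
  \<open>F(x(t)) - \<epsilon> t\<close> can never rise above its eventual value once it is positive, so
  \<open>F(x(t)) \<le> 2 \<epsilon> t\<close> for large \<open>t\<close>. For \<open>f \<in> RV\<^sub>0(\<beta>)\<close> with \<open>\<beta> > 1\<close> the comparison
  comes from substituting \<open>u = K v\<close> in the integral defining \<open>F\<close>: for large \<open>K\<close>,
  \<open>F(K a) < \<epsilon> F(a)\<close> as \<open>a \<rightarrow> 0\<^sup>+\<close>.\<close>

lemma positive_if_derivative_positive_at_nonpositive:
  fixes x D :: "real \<Rightarrow> real"
  assumes x_cont: "continuous_on {0..} x" and x0: "0 < x 0"
    and x_deriv: "\<And>t. 0 < t \<Longrightarrow> (x has_real_derivative D t) (at t)"
    and D_pos: "\<And>t. 0 < t \<Longrightarrow> x t \<le> 0 \<Longrightarrow> 0 < D t"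
    and t: "0 \<le> t"
  shows "0 < x t"
proof (rule ccontr)
  assume "\<not> 0 < x t"
  define S where "S = {\<tau> \<in> {0..t}. x \<tau> \<le> 0}"
  have "continuous_on {0..t} x"
    by (rule continuous_on_subset[OF x_cont]) auto
  then have "closed S"
    unfolding S_def by (rule continuous_on_closed_Collect_le[OF _ continuous_on_const]) simp
  moreover have "t \<in> S" "bdd_below S"
    using t \<open>\<not> 0 < x t\<close> by (auto simp: S_def intro: bdd_belowI[of _ 0])
  ultimately have "Inf S \<in> S"
    using closed_contains_Inf by blast
  define t0 where "t0 = Inf S"
  have t0: "0 \<le> t0" "x t0 \<le> 0"
    using \<open>Inf S \<in> S\<close> by (auto simp: S_def t0_def)
  have first: "0 < x \<tau>" if "0 \<le> \<tau>" "\<tau> < t0" for \<tau>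
  proof (rule ccontr)
    assume "\<not> 0 < x \<tau>"
    with that \<open>Inf S \<in> S\<close> have "\<tau> \<in> S"
      by (auto simp: S_def t0_def)
    with that show False
      using cInf_lower[OF _ \<open>bdd_below S\<close>] by (force simp: t0_def)
  qed
  have "0 < t0"
    using t0 x0 by (cases "t0 = 0") auto
  obtain h where h: "0 < h" "\<And>k. 0 < k \<Longrightarrow> k < h \<Longrightarrow> x (t0 - k) < x t0"
    using DERIV_pos_inc_left[OF x_deriv D_pos] \<open>0 < t0\<close> t0(2) by blast
  define k where "k = min h t0 / 2"
  have "x (t0 - k) < x t0" "0 < x (t0 - k)"
    using h \<open>0 < t0\<close> first[of "t0 - k"] by (auto simp: k_def)
  with t0 show False by simp
qed

lemma almost_increasing_near_0:
  fixes f \<phi> :: "real \<Rightarrow> real"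
  assumes f_pos: "\<And>u. 0 < u \<Longrightarrow> 0 < f u" and "0 < \<delta>"
    and \<phi>_mono: "mono_on {0<..<\<delta>} \<phi>"
    and f_\<phi>: "((\<lambda>y. f y / \<phi> y) \<longlongrightarrow> 1) (at_right 0)"
  obtains d where "0 < d" "\<And>u v. 0 < u \<Longrightarrow> u \<le> v \<Longrightarrow> v < d \<Longrightarrow> f u \<le> 3 * f v"
proof -
  obtain b where b: "0 < b" "\<And>y. 0 < y \<Longrightarrow> y < b \<Longrightarrow> \<bar>f y / \<phi> y - 1\<bar> < 1/2"
    using f_\<phi>[unfolded tendsto_iff, rule_format, of "1/2"]
    unfolding eventually_at_right_field dist_real_def by auto
  have comparable: "0 < \<phi> y \<and> f y < 3/2 * \<phi> y \<and> \<phi> y < 2 * f y" if "0 < y" "y < b" for y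
  proof -
    have ratio: "1/2 < f y / \<phi> y" "f y / \<phi> y < 3/2"
      using b(2)[OF that] by linarith+
    have "0 < \<phi> y"
    proof (rule ccontr)
      assume "\<not> 0 < \<phi> y"
      then have "f y / \<phi> y \<le> 0"
        using f_pos[OF \<open>0 < y\<close>] by (simp add: divide_nonneg_nonpos)
      with ratio show False
        by linarith
    qed
    with ratio show ?thesis
      by (simp add: pos_divide_less_eq pos_less_divide_eq)
  qed
  show ?thesis
  proof
    show "0 < min b \<delta>"
      using b \<open>0 < \<delta>\<close> by simp
    fix u v assume uv: "0 < u" "u \<le> v" "v < min b \<delta>"
    then have "\<phi> u \<le> \<phi> v"
      by (intro mono_onD[OF \<phi>_mono]) auto
    with uv comparable[of u] comparable[of v] show "f u \<le> 3 * f v"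
      by auto
  qed
qed

lemma RVinf_bounded_ratio:
  fixes h :: "real \<Rightarrow> real"
  assumes h: "RVinf \<alpha> h" and "0 < c"
  obtains C where "0 < C" "eventually (\<lambda>t. h (c * t) \<le> C * h t) at_top"
proof
  show "0 < c powr \<alpha> + 1"
    using powr_ge_zero[of c \<alpha>] by linarith
  obtain T where T: "\<And>t. T \<le> t \<Longrightarrow> 0 < h t"
    using h unfolding RVinf_def by blast
  have "((\<lambda>t. h (c * t) / h t) \<longlongrightarrow> c powr \<alpha>) at_top"
    using h \<open>0 < c\<close> unfolding RVinf_def by blast
  then have "eventually (\<lambda>t. h (c * t) / h t < c powr \<alpha> + 1) at_top"
    by (rule order_tendstoD) simp
  then show "eventually (\<lambda>t. h (c * t) \<le> (c powr \<alpha> + 1) * h t) at_top"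
    using eventually_ge_at_top[of T]
    by eventually_elim (use T in \<open>auto simp: pos_divide_less_eq less_imp_le\<close>)
qed

lemma tendsto_divide_zero_if_sublinear:
  fixes h :: "real \<Rightarrow> real"
  assumes nonneg: "eventually (\<lambda>t. 0 \<le> h t) at_top"
    and sublinear: "\<And>\<epsilon>. 0 < \<epsilon> \<Longrightarrow> eventually (\<lambda>t. h t \<le> \<epsilon> * t) at_top"
  shows "((\<lambda>t. h t / t) \<longlongrightarrow> 0) at_top"
proof (rule tendstoI)
  fix e :: real assume "0 < e"
  with sublinear[of "e/2"] have "eventually (\<lambda>t. h t \<le> e/2 * t) at_top"
    by simp
  with nonneg show "eventually (\<lambda>t. dist (h t / t) 0 < e) at_top"
    using eventually_gt_at_top[of 0]
  proof eventually_elim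
    case (elim t)
    moreover have "0 < e * t"
      using \<open>0 < e\<close> elim by simp
    ultimately show ?case
      by (simp add: field_simps)
  qed
qed

lemma last_crossing:
  fixes h :: "real \<Rightarrow> real"
  assumes "continuous_on {a..b} h" "a \<le> b" "h a \<le> m" "m < h b"
  obtains s where "a \<le> s" "s < b" "h s \<le> m" "\<And>\<tau>. s < \<tau> \<Longrightarrow> \<tau> \<le> b \<Longrightarrow> m < h \<tau>"
proof -
  define S where "S = {\<tau> \<in> {a..b}. h \<tau> \<le> m}"
  have "closed S"
    unfolding S_def by (rule continuous_on_closed_Collect_le[OF assms(1) continuous_on_const]) simp
  moreover have "a \<in> S" "bdd_above S"
    using assms(2,3) by (auto simp: S_def intro: bdd_aboveI[of _ b])
  ultimately have "Sup S \<in> S"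
    using closed_contains_Sup by blast
  then have s: "a \<le> Sup S" "Sup S \<le> b" "h (Sup S) \<le> m"
    by (auto simp: S_def)
  show ?thesis
  proof (rule that[OF s(1) _ s(3)])
    show "Sup S < b"
      using s \<open>m < h b\<close> by (cases "Sup S = b") auto
    fix \<tau> assume \<tau>: "Sup S < \<tau>" "\<tau> \<le> b"
    show "m < h \<tau>"
    proof (rule ccontr)
      assume "\<not> m < h \<tau>"
      with \<tau> s have "\<tau> \<in> S"
        by (auto simp: S_def)
      with \<tau> show False
        using cSup_upper[OF _ \<open>bdd_above S\<close>] by force
    qed
  qed
qed

context
  fixes f :: "real \<Rightarrow> real"
  assumes f_cont: "continuous_on {0<..} f"
    and f_pos: "\<And>u. 0 < u \<Longrightarrow> 0 < f u"
begin

lemma integrable_inverse: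
  assumes "0 < a"
  shows "(\<lambda>u. 1 / f u) integrable_on {a..b}"
proof (intro integrable_continuous_interval continuous_on_divide continuous_on_const
    continuous_on_subset[OF f_cont] ballI)
  fix u assume "u \<in> {a..b}"
  with assms show "f u \<noteq> 0"
    using f_pos[of u] by simp
qed (use assms in auto)

lemma integral_inverse_nonneg:
  assumes "0 < a"
  shows "0 \<le> integral {a..b} (\<lambda>u. 1 / f u)"
proof (rule integral_nonneg[OF integrable_inverse[OF assms]])
  fix u assume "u \<in> {a..b}"
  with assms show "0 \<le> 1 / f u"
    using f_pos[of u] by simp
qed

lemma Fint_eq_minus_integral:
  assumes "0 < c" "c \<le> u"
  shows "Fint f u = Fint f c - integral {c..u} (\<lambda>u. 1 / f u)"
proof -
  have combine: "integral {a..b} (\<lambda>u. 1 / f u) + integral {b..e} (\<lambda>u. 1 / f u)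
      = integral {a..e} (\<lambda>u. 1 / f u)" if "0 < a" "a \<le> b" "b \<le> e" for a b e
    using Henstock_Kurzweil_Integration.integral_combine[OF that(2,3) integrable_inverse[OF that(1)]] .
  show ?thesis
    using assms combine[of c u 1] combine[of c 1 u] combine[of 1 c u]
    by (cases "u \<le> 1"; cases "c \<le> 1") (auto simp: Fint_def)
qed

lemma Fint_antimono: "0 < a \<Longrightarrow> a \<le> b \<Longrightarrow> Fint f b \<le> Fint f a"
  using Fint_eq_minus_integral[of a b] integral_inverse_nonneg[of a b] by simp

lemma Fint_one: "Fint f 1 = 0"
  by (simp add: Fint_def)

lemma Fint_nonneg: "0 < u \<Longrightarrow> u \<le> 1 \<Longrightarrow> 0 \<le> Fint f u"
  using Fint_antimono[of u 1] by (simp add: Fint_one)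

lemma continuous_on_Fint: "continuous_on {0<..} (Fint f)"
proof (intro continuous_at_imp_continuous_on ballI)
  fix u :: real assume "u \<in> {0<..}"
  then have u: "0 < u" by simp
  have "continuous_on {u/2..u+1} (\<lambda>v. Fint f (u/2) - integral {u/2..v} (\<lambda>u. 1 / f u))"
    by (intro continuous_intros indefinite_integral_continuous_1 integrable_inverse) (use u in simp)
  then have "continuous_on {u/2..u+1} (Fint f)"
    by (rule continuous_on_eq) (use u in \<open>auto intro: Fint_eq_minus_integral[symmetric]\<close>)
  then show "isCont (Fint f) u"
    by (rule continuous_on_interior) (use u in auto)
qed

lemma integral_inverse_stretch_le:
  assumes a: "0 < a" "a \<le> v" and "0 < K" "0 < c"
    and stretch: "\<And>y. y \<in> {a..v} \<Longrightarrow> c * f y \<le> f (K * y)"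
  shows "integral {K * a..K * v} (\<lambda>u. 1 / f u) \<le> K / c * integral {a..v} (\<lambda>u. 1 / f u)"
proof -
  define I where "I = integral {K * a..K * v} (\<lambda>u. 1 / f u)"
  define J where "J = integral {a..v} (\<lambda>y. 1 / f (K * y))"
  have image: "(\<lambda>y. y / K) ` {K * a..K * v} = {a..v}"
    using \<open>0 < K\<close> by simp
  have J_I: "J = 1 / K * I"
    using integral_stretch_real[of K "K * a" "K * v" "\<lambda>u. 1 / f u"] \<open>0 < K\<close>
    by (simp add: image I_def J_def)
  have J_le: "J \<le> 1 / c * integral {a..v} (\<lambda>u. 1 / f u)"
    unfolding J_def integral_mult_right[symmetric]
  proof (rule integral_le)
    show "(\<lambda>y. 1 / f (K * y)) integrable_on {a..v}"
      using integrable_stretch_real[OF integrable_inverse, of "K * a" K "K * v"] a \<open>0 < K\<close>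
      by (simp add: image)
    show "(\<lambda>y. 1 / c * (1 / f y)) integrable_on {a..v}"
      by (intro integrable_on_mult_right integrable_inverse a)
    fix y assume y: "y \<in> {a..v}"
    then have "0 < f y" "0 < f (K * y)"
      using a \<open>0 < K\<close> by (auto intro!: f_pos)
    with stretch[OF y] \<open>0 < c\<close> show "1 / f (K * y) \<le> 1 / c * (1 / f y)"
      by (simp add: field_simps)
  qed
  have "I = K * J"
    using J_I \<open>0 < K\<close> by simp
  also have "\<dots> \<le> K * (1 / c * integral {a..v} (\<lambda>u. 1 / f u))"
    using J_le \<open>0 < K\<close> by (rule mult_left_mono[OF _ less_imp_le])
  finally show ?thesis
    by (simp add: I_def)
qed

lemma Fint_stretch_diff_le:
  assumes "0 < a" "a \<le> v" "0 < K" "0 < c"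
    and "\<And>y. y \<in> {a..v} \<Longrightarrow> c * f y \<le> f (K * y)"
  shows "Fint f (K * a) - Fint f (K * v) \<le> K / c * (Fint f a - Fint f v)"
  using integral_inverse_stretch_le[OF assms] assms(1-3)
    Fint_eq_minus_integral[of a v] Fint_eq_minus_integral[of "K * a" "K * v"] by simp

lemma Fint_comp_antimono_if_derivative_pos:
  fixes x D :: "real \<Rightarrow> real"
  assumes "s < t" "continuous_on {s..t} x" "0 < x s"
    and "\<And>\<tau>. s < \<tau> \<Longrightarrow> \<tau> < t \<Longrightarrow> (x has_real_derivative D \<tau>) (at \<tau>)"
    and "\<And>\<tau>. s < \<tau> \<Longrightarrow> \<tau> < t \<Longrightarrow> 0 < D \<tau>"
  shows "Fint f (x t) \<le> Fint f (x s)"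
proof -
  have "x s < x t"
    by (rule DERIV_pos_imp_increasing_open[OF assms(1) _ assms(2)]) (use assms(4,5) in blast)
  with \<open>0 < x s\<close> show ?thesis
    by (intro Fint_antimono) auto
qed

lemma Fint_comp_barrier:
  fixes x D :: "real \<Rightarrow> real"
  assumes x_cont: "continuous_on {T..} x" and x_pos: "\<And>t. T \<le> t \<Longrightarrow> 0 < x t"
    and x_deriv: "\<And>t. T < t \<Longrightarrow> (x has_real_derivative D t) (at t)"
    and D_pos: "\<And>t. T < t \<Longrightarrow> \<epsilon> * t < Fint f (x t) \<Longrightarrow> 0 < D t"
    and "0 \<le> \<epsilon>" "0 \<le> m" and start: "Fint f (x T) - \<epsilon> * T \<le> m" and "T \<le> t"
  shows "Fint f (x t) - \<epsilon> * t \<le> m"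
proof (rule ccontr)
  define h where "h \<tau> = Fint f (x \<tau>) - \<epsilon> * \<tau>" for \<tau>
  assume "\<not> Fint f (x t) - \<epsilon> * t \<le> m"
  then have "m < h t"
    by (simp add: h_def)
  have "continuous_on {T..t} (\<lambda>\<tau>. Fint f (x \<tau>))"
    by (rule continuous_on_compose2[OF continuous_on_Fint continuous_on_subset[OF x_cont]])
      (use x_pos in auto)
  then have h_cont: "continuous_on {T..t} h"
    unfolding h_def by (intro continuous_intros)
  obtain s where s: "T \<le> s" "s < t" "h s \<le> m" and last: "\<And>\<tau>. s < \<tau> \<Longrightarrow> \<tau> \<le> t \<Longrightarrow> m < h \<tau>"
    using last_crossing[OF h_cont \<open>T \<le> t\<close> _ \<open>m < h t\<close>] start by (auto simp: h_def)
  have "Fint f (x t) \<le> Fint f (x s)"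
  proof (rule Fint_comp_antimono_if_derivative_pos[OF s(2)])
    show "continuous_on {s..t} x"
      by (rule continuous_on_subset[OF x_cont]) (use s in auto)
    show "0 < x s"
      using x_pos s by simp
    fix \<tau> assume \<tau>: "s < \<tau>" "\<tau> < t"
    then have "\<epsilon> * \<tau> < Fint f (x \<tau>)"
      using last[of \<tau>] \<open>0 \<le> m\<close> by (simp add: h_def)
    moreover from \<tau> s have "T < \<tau>"
      by simp
    ultimately show "(x has_real_derivative D \<tau>) (at \<tau>)" "0 < D \<tau>"
      by (simp_all add: x_deriv D_pos)
  qed
  then have "h t \<le> h s"
    using mult_left_mono[of s t \<epsilon>] s(2) \<open>0 \<le> \<epsilon>\<close> by (simp add: h_def)
  with s \<open>m < h t\<close> show False
    by simp
qed

context
  assumes F_lim: "filterlim (Fint f) at_top (at_right 0)"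
begin

lemma Fint_attains:
  assumes "0 \<le> s"
  obtains u where "0 < u" "Fint f u = s"
proof -
  obtain b where b: "0 < b" "\<And>y. 0 < y \<Longrightarrow> y < b \<Longrightarrow> s < Fint f y"
    using F_lim[unfolded filterlim_at_top_dense, rule_format, of s]
    unfolding eventually_at_right_field by auto
  define u0 where "u0 = min (b/2) 1"
  have u0: "0 < u0" "u0 < b" "u0 \<le> 1"
    using b by (auto simp: u0_def)
  have "continuous_on {u0..1} (Fint f)"
    by (rule continuous_on_subset[OF continuous_on_Fint]) (use u0 in auto)
  then obtain u where "u0 \<le> u" "Fint f u = s"
    using IVT2'[of "Fint f" 1 s u0] b(2)[OF u0(1,2)] u0(3) assms by (auto simp: Fint_one)
  with u0 show ?thesis
    by (intro that[of u]) auto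
qed

lemma Finv_pos: "0 \<le> s \<Longrightarrow> 0 < Finv f s"
  and Fint_Finv: "0 \<le> s \<Longrightarrow> Fint f (Finv f s) = s"
proof -
  assume "0 \<le> s"
  then obtain u where "0 < u" "Fint f u = s"
    by (rule Fint_attains)
  then have s: "s \<in> Fint f ` {0<..}" by auto
  show "0 < Finv f s"
    using inv_into_into[OF s] by (simp add: Finv_def)
  show "Fint f (Finv f s) = s"
    using f_inv_into_f[OF s] by (simp add: Finv_def)
qed

text \<open>\<open>Finv f\<close> picks some preimage under \<open>Fint f\<close>, which is only known to be antitone, so it is
  compared with other points through strict inequalities between values of \<open>Fint f\<close>.\<close>

lemma less_Finv: "0 \<le> s \<Longrightarrow> 0 < y \<Longrightarrow> s < Fint f y \<Longrightarrow> y < Finv f s"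
  using Fint_antimono[of "Finv f s" y] Finv_pos Fint_Finv by force

lemma Finv_less: "0 \<le> s \<Longrightarrow> 0 < y \<Longrightarrow> Fint f y < s \<Longrightarrow> Finv f s < y"
  using Fint_antimono[of y "Finv f s"] Fint_Finv by force

lemma filterlim_Finv_at_top: "filterlim (Finv f) (at_right 0) at_top"
proof (rule tendsto_imp_filterlim_at_right)
  show "eventually (\<lambda>s. 0 < Finv f s) at_top"
    using eventually_ge_at_top[of 0] by eventually_elim (rule Finv_pos)
  show "(Finv f \<longlongrightarrow> 0) at_top"
  proof (rule order_tendstoI)
    fix a :: real assume "a < 0"
    show "eventually (\<lambda>s. a < Finv f s) at_top"
      using eventually_ge_at_top[of 0] by eventually_elim (use Finv_pos \<open>a < 0\<close> in force)
  next
    fix a :: real assume "0 < a"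
    show "eventually (\<lambda>s. Finv f s < a) at_top"
      using eventually_gt_at_top[of "max 0 (Fint f a)"]
      by eventually_elim (use Finv_less \<open>0 < a\<close> in auto)
  qed
qed

lemma RV0_Fint_stretch_less:
  assumes "1 < \<beta>" "RV0 \<beta> f" "0 < e"
  obtains K where "0 < K" "eventually (\<lambda>a. Fint f (K * a) < e * Fint f a) (at_right 0)"
proof
  define K where "K = (e/4) powr (1 / (1 - \<beta>))"
  show "0 < K"
    using \<open>0 < e\<close> by (simp add: K_def)
  have "K powr (1 - \<beta>) = e/4"
    using \<open>1 < \<beta>\<close> \<open>0 < e\<close> by (simp add: K_def powr_powr)
  then have K_factor: "K / (K powr \<beta> / 2) = e/2"
    using \<open>0 < K\<close> by (simp add: powr_diff field_simps)
  have "((\<lambda>y. f (K * y) / f y) \<longlongrightarrow> K powr \<beta>) (at_right 0)"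
    using \<open>RV0 \<beta> f\<close> \<open>0 < K\<close> unfolding RV0_def by blast
  then have "eventually (\<lambda>y. K powr \<beta> / 2 < f (K * y) / f y) (at_right 0)"
    by (rule order_tendstoD) (use \<open>0 < K\<close> in simp)
  then obtain b where b: "0 < b" "\<And>y. 0 < y \<Longrightarrow> y < b \<Longrightarrow> K powr \<beta> / 2 < f (K * y) / f y"
    unfolding eventually_at_right_field by blast
  define v where "v = b/2"
  define C0 where "C0 = Fint f (K * v) - e/2 * Fint f v"
  have bound: "Fint f (K * a) \<le> e/2 * Fint f a + C0" if a: "0 < a" "a \<le> v" for a
  proof -
    have "Fint f (K * a) - Fint f (K * v) \<le> e/2 * (Fint f a - Fint f v)"
    proof (subst K_factor[symmetric], rule Fint_stretch_diff_le)
      fix y assume "y \<in> {a..v}"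
      with a b(1) have "0 < y" "y < b" "0 < f y"
        by (auto simp: v_def intro: f_pos)
      with b(2) show "K powr \<beta> / 2 * f y \<le> f (K * y)"
        by (fastforce simp: field_simps)
    qed (use a \<open>0 < K\<close> in auto)
    then show ?thesis
      by (simp add: C0_def algebra_simps)
  qed
  have "eventually (\<lambda>a. 0 < a \<and> a \<le> v \<and> C0 < e/2 * Fint f a) (at_right 0)"
  proof (intro eventually_conj)
    show "eventually (\<lambda>a::real. 0 < a) (at_right 0)"
      by (rule eventually_at_right_less)
    show "eventually (\<lambda>a. a \<le> v) (at_right 0)"
      unfolding eventually_at_right_field using b(1) by (intro exI[of _ v]) (auto simp: v_def)
    show "eventually (\<lambda>a. C0 < e/2 * Fint f a) (at_right 0)"
      using F_lim[unfolded filterlim_at_top_dense, rule_format, of "2 * C0 / e"]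
      by eventually_elim (use \<open>0 < e\<close> in \<open>simp add: field_simps\<close>)
  qed
  then show "eventually (\<lambda>a. Fint f (K * a) < e * Fint f a) (at_right 0)"
    by eventually_elim (use bound in fastforce)
qed

lemma RV0_Finv_bounded_ratio:
  assumes "1 < \<beta>" "RV0 \<beta> f" "0 < e" "0 < M" "0 < d"
    and almost_increasing: "\<And>u v. 0 < u \<Longrightarrow> u \<le> v \<Longrightarrow> v < d \<Longrightarrow> f u \<le> M * f v"
  obtains C where "0 < C" "eventually (\<lambda>t. f (Finv f (e * t)) \<le> C * f (Finv f t)) at_top"
proof -
  obtain K where "0 < K" and K: "eventually (\<lambda>a. Fint f (K * a) < e * Fint f a) (at_right 0)"
    using RV0_Fint_stretch_less[OF assms(1-3)] .
  have "((\<lambda>y. f (K * y) / f y) \<longlongrightarrow> K powr \<beta>) (at_right 0)"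
    using \<open>RV0 \<beta> f\<close> \<open>0 < K\<close> unfolding RV0_def by blast
  then have "eventually (\<lambda>a. f (K * a) / f a < K powr \<beta> + 1) (at_right 0)"
    by (rule order_tendstoD) simp
  moreover have "eventually (\<lambda>a. K * a < d) (at_right 0)"
    using \<open>0 < K\<close> \<open>0 < d\<close> unfolding eventually_at_right_field
    by (intro exI[of _ "d / K"]) (auto simp: field_simps)
  ultimately have "eventually (\<lambda>a. Fint f (K * a) < e * Fint f a \<and> K * a < d
      \<and> f (K * a) / f a < K powr \<beta> + 1) (at_right 0)"
    using K by eventually_elim blast
  then have "eventually (\<lambda>t. Fint f (K * Finv f t) < e * Fint f (Finv f t) \<and> K * Finv f t < d
      \<and> f (K * Finv f t) / f (Finv f t) < K powr \<beta> + 1) at_top"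
    by (rule eventually_compose_filterlim[OF _ filterlim_Finv_at_top])
  then have "eventually (\<lambda>t. f (Finv f (e * t)) \<le> M * (K powr \<beta> + 1) * f (Finv f t)) at_top"
    using eventually_ge_at_top[of 0]
  proof eventually_elim
    case (elim t)
    define a where "a = Finv f t"
    have a: "0 < a" "0 < f a" "Fint f a = t"
      using elim(2) by (auto simp: a_def Finv_pos Fint_Finv f_pos)
    have Ka: "Fint f (K * a) < e * t" "K * a < d" "f (K * a) < (K powr \<beta> + 1) * f a"
      using elim(1) a by (auto simp: a_def[symmetric] pos_divide_less_eq)
    have "Finv f (e * t) < K * a"
      using Ka(1) a(1) \<open>0 < K\<close> \<open>0 < e\<close> elim(2) by (intro Finv_less) auto
    then have "f (Finv f (e * t)) \<le> M * f (K * a)"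
      using Finv_pos[of "e * t"] \<open>0 < e\<close> elim(2) Ka(2) by (intro almost_increasing) auto
    also have "\<dots> \<le> M * ((K powr \<beta> + 1) * f a)"
      using Ka(3) \<open>0 < M\<close> by simp
    finally show ?case
      by (simp add: a_def mult.assoc)
  qed
  moreover have "0 < M * (K powr \<beta> + 1)"
    using \<open>0 < M\<close> powr_ge_zero[of K \<beta>] by (simp add: add_nonneg_pos)
  ultimately show ?thesis
    using that by blast
qed

lemma Finv_bounded_ratio:
  assumes "(1 < \<beta> \<and> RV0 \<beta> f) \<or> RVinf \<alpha> (\<lambda>t. f (Finv f t))" "0 < e" "0 < M" "0 < d"
    and almost_increasing: "\<And>u v. 0 < u \<Longrightarrow> u \<le> v \<Longrightarrow> v < d \<Longrightarrow> f u \<le> M * f v"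
  obtains C where "eventually (\<lambda>t. f (Finv f (e * t)) \<le> C * f (Finv f t)) at_top"
proof (cases "1 < \<beta> \<and> RV0 \<beta> f")
  case True
  then show ?thesis
    using RV0_Finv_bounded_ratio[OF _ _ \<open>0 < e\<close> \<open>0 < M\<close> \<open>0 < d\<close> almost_increasing] that by blast
next
  case False
  with assms(1) have "RVinf \<alpha> (\<lambda>t. f (Finv f t))"
    by blast
  then show ?thesis
    using RVinf_bounded_ratio[OF _ \<open>0 < e\<close>] that by blast
qed

lemma f_less_of_Fint_gt:
  assumes almost_increasing: "\<And>u v. 0 < u \<Longrightarrow> u \<le> v \<Longrightarrow> v < d \<Longrightarrow> f u \<le> M * f v"
    and "0 \<le> M" "0 < \<epsilon>" "0 < t" "0 < y" "\<epsilon> * t < Fint f y" "Finv f (\<epsilon> * t) < d"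
    and ratio: "f (Finv f (\<epsilon> * t)) \<le> C * f (Finv f t)" and forcing: "M * C < g / f (Finv f t)"
  shows "f y < g"
proof -
  have "0 < f (Finv f t)"
    using \<open>0 < t\<close> by (simp add: Finv_pos f_pos)
  have "y < Finv f (\<epsilon> * t)"
    using assms(3-6) by (intro less_Finv) auto
  then have "f y \<le> M * f (Finv f (\<epsilon> * t))"
    using \<open>0 < y\<close> \<open>Finv f (\<epsilon> * t) < d\<close> by (intro almost_increasing) auto
  also have "\<dots> \<le> M * (C * f (Finv f t))"
    using ratio \<open>0 \<le> M\<close> by (rule mult_left_mono)
  also have "\<dots> < g"
    using forcing \<open>0 < f (Finv f t)\<close> by (simp add: pos_less_divide_eq mult.assoc)
  finally show ?thesis .
qed

lemma eventually_f_less_if_Fint_gt: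
  assumes g_lim: "filterlim (\<lambda>t. g t / f (Finv f t)) at_top at_top"
    and "0 < d" and almost_increasing: "\<And>u v. 0 < u \<Longrightarrow> u \<le> v \<Longrightarrow> v < d \<Longrightarrow> f u \<le> M * f v"
    and "0 < \<epsilon>" and ratio: "eventually (\<lambda>t. f (Finv f (\<epsilon> * t)) \<le> C * f (Finv f t)) at_top"
  shows "eventually (\<lambda>t. \<forall>y>0. \<epsilon> * t < Fint f y \<longrightarrow> f y < g t) at_top"
proof -
  have "0 \<le> M"
    using almost_increasing[of "d/2" "d/2"] f_pos[of "d/2"] \<open>0 < d\<close>
    by (simp add: mult_le_cancel_right1)
  have "eventually (\<lambda>v. v < d) (at_right 0)"
    unfolding eventually_at_right_field using \<open>0 < d\<close> by (intro exI[of _ d]) auto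
  then have "eventually (\<lambda>s. Finv f s < d) at_top"
    by (rule eventually_compose_filterlim[OF _ filterlim_Finv_at_top])
  then have "eventually (\<lambda>t. Finv f (\<epsilon> * t) < d) at_top"
    by (rule eventually_compose_filterlim[OF _
          filterlim_tendsto_pos_mult_at_top[OF tendsto_const \<open>0 < \<epsilon>\<close> filterlim_ident]])
  moreover have "eventually (\<lambda>t. M * C < g t / f (Finv f t)) at_top"
    using filterlim_at_top_dense[THEN iffD1, OF g_lim] by blast
  ultimately show ?thesis
    using ratio eventually_gt_at_top[of 0]
    by eventually_elim (use f_less_of_Fint_gt[OF almost_increasing \<open>0 \<le> M\<close> \<open>0 < \<epsilon>\<close>] in blast)
qed

lemma Fint_solution_eventually_le_linear:
  fixes x g :: "real \<Rightarrow> real"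
  assumes x_cont: "continuous_on {0..} x" and x_pos: "\<And>t. 0 \<le> t \<Longrightarrow> 0 < x t"
    and x_ode: "\<And>t. 0 < t \<Longrightarrow> (x has_real_derivative (- f (x t) + g t)) (at t)"
    and g_lim: "filterlim (\<lambda>t. g t / f (Finv f t)) at_top at_top"
    and "0 < d" and almost_increasing: "\<And>u v. 0 < u \<Longrightarrow> u \<le> v \<Longrightarrow> v < d \<Longrightarrow> f u \<le> M * f v"
    and "0 < \<epsilon>" and ratio: "eventually (\<lambda>t. f (Finv f (\<epsilon> * t)) \<le> C * f (Finv f t)) at_top"
  shows "eventually (\<lambda>t. Fint f (x t) \<le> 2 * \<epsilon> * t) at_top"
proof -
  have "eventually (\<lambda>t. 1 \<le> t \<and> (\<forall>y>0. \<epsilon> * t < Fint f y \<longrightarrow> f y < g t)) at_top"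
    using eventually_ge_at_top[of 1]
      eventually_f_less_if_Fint_gt[OF g_lim \<open>0 < d\<close> almost_increasing \<open>0 < \<epsilon>\<close> ratio]
    by (rule eventually_conj)
  then obtain T where T: "\<And>t. T \<le> t \<Longrightarrow> 1 \<le> t \<and> (\<forall>y>0. \<epsilon> * t < Fint f y \<longrightarrow> f y < g t)"
    unfolding eventually_at_top_linorder by blast
  then have "1 \<le> T"
    by blast
  have D_pos: "0 < - f (x t) + g t" if "T < t" "\<epsilon> * t < Fint f (x t)" for t
    using T[of t] that x_pos[of t] by simp
  define m where "m = max (Fint f (x T) - \<epsilon> * T) 0"
  have barrier: "Fint f (x t) - \<epsilon> * t \<le> m" if "T \<le> t" for t
  proof (rule Fint_comp_barrier[where D = "\<lambda>t. - f (x t) + g t"])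
    show "continuous_on {T..} x"
      using \<open>1 \<le> T\<close> by (intro continuous_on_subset[OF x_cont]) auto
    show "0 < x \<tau>" if "T \<le> \<tau>" for \<tau>
      using that \<open>1 \<le> T\<close> x_pos by simp
    show "(x has_real_derivative - f (x \<tau>) + g \<tau>) (at \<tau>)" if "T < \<tau>" for \<tau>
      using that \<open>1 \<le> T\<close> x_ode by simp
    show "0 < - f (x \<tau>) + g \<tau>" if "T < \<tau>" "\<epsilon> * \<tau> < Fint f (x \<tau>)" for \<tau>
      using that by (rule D_pos)
  qed (use that \<open>0 < \<epsilon>\<close> in \<open>auto simp: m_def\<close>)
  have "eventually (\<lambda>t. max T (m / \<epsilon>) \<le> t) at_top"
    by (rule eventually_ge_at_top)
  then show ?thesis
  proof eventually_elim
    case (elim t)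
    then have "m \<le> \<epsilon> * t"
      using \<open>0 < \<epsilon>\<close> by (simp add: field_simps)
    with barrier[of t] elim show ?case
      by linarith
  qed
qed

end

end

theorem theorem3:
  fixes f g x \<phi> :: "real \<Rightarrow> real" and \<xi> \<delta> \<beta> :: real
  assumes f_cont: "continuous_on UNIV f"
    and f_loclip: "\<forall>y. \<exists>u>0. \<exists>L. L-lipschitz_on (cball y u) f"
    and f0: "f 0 = 0"
    and f_sign: "\<forall>y. y \<noteq> 0 \<longrightarrow> y * f y > 0"
    and g_cont: "continuous_on {0..} g"
    and g_pos: "\<forall>t>0. g t > 0"
    and xi_pos: "\<xi> > 0"
    and F_lim: "filterlim (Fint f) at_top (at_right 0)"
    and x_cont: "continuous_on {0..} x"
    and x_init: "x 0 = \<xi>"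
    and x_ode: "\<forall>t>0. (x has_real_derivative (- f (x t) + g t)) (at t)"
    and delta_pos: "\<delta> > 0"
    and phi_mono: "mono_on {0<..<\<delta>} \<phi>"
    and f_phi: "((\<lambda>y. f y / \<phi> y) \<longlongrightarrow> 1) (at_right 0)"
    and g_lim: "filterlim (\<lambda>t. g t / f (Finv f t)) at_top at_top"
    and x_lim: "(x \<longlongrightarrow> 0) at_top"
    and case_RV: "(\<beta> > 1 \<and> RV0 \<beta> f) \<or> RVinf (-1) (\<lambda>t. f (Finv f t))"
  shows "((\<lambda>t. Fint f (x t) / t) \<longlongrightarrow> 0) at_top"
proof -
  have f_pos: "0 < f u" if "0 < u" for u
    using that f_sign[rule_format, of u] by (simp add: zero_less_mult_iff)
  have f_nonpos: "f u \<le> 0" if "u \<le> 0" for u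
    using that f0 f_sign[rule_format, of u] by (cases "u = 0") (auto simp: zero_less_mult_iff)
  have f_cont': "continuous_on {0<..} f"
    using f_cont by (rule continuous_on_subset) simp
  have x_pos: "0 < x t" if "0 \<le> t" for t
    using positive_if_derivative_positive_at_nonpositive[OF x_cont _ _ _ that] x_init xi_pos
      x_ode f_nonpos g_pos by force
  obtain d where "0 < d" and almost_increasing: "\<And>u v. 0 < u \<Longrightarrow> u \<le> v \<Longrightarrow> v < d \<Longrightarrow> f u \<le> 3 * f v"
    using almost_increasing_near_0[OF f_pos delta_pos phi_mono f_phi] by blast
  have sublinear: "eventually (\<lambda>t. Fint f (x t) \<le> \<epsilon> * t) at_top" if "0 < \<epsilon>" for \<epsilon>
  proof -
    have "0 < \<epsilon>/2"
      using that by simp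
    obtain C where "eventually (\<lambda>t. f (Finv f (\<epsilon>/2 * t)) \<le> C * f (Finv f t)) at_top"
      by (rule Finv_bounded_ratio[OF f_cont' f_pos F_lim case_RV \<open>0 < \<epsilon>/2\<close> zero_less_numeral
            \<open>0 < d\<close> almost_increasing])
    with x_ode that show ?thesis
      using Fint_solution_eventually_le_linear[OF f_cont' f_pos F_lim x_cont x_pos _ g_lim \<open>0 < d\<close>
          almost_increasing, of "\<epsilon>/2" C] by simp
  qed
  have "eventually (\<lambda>t. x t < 1) at_top"
    using x_lim by (rule order_tendstoD) simp
  then have nonneg: "eventually (\<lambda>t. 0 \<le> Fint f (x t)) at_top"
    using eventually_ge_at_top[of 0] by eventually_elim (simp add: Fint_nonneg f_cont' f_pos x_pos)
  show ?thesis
    using nonneg sublinear by (rule tendsto_divide_zero_if_sublinear)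
qed

end
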